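(* Let $Par^{bal}(k)$ denote the subspace of the partition algebra $Par(n,k)$ spanned by the balanced set partitions. Then: (1) $Par^{bal}(k)$ is a subalgebra of $Par(n,k)$; (2) for any $n,m$, the identification of these subspaces of $Par(n,k)$ and $Par(m,k)$ via the common basis of balanced set partitions is an isomorphism of algebras; (3) the action of $Par(n,k)$ on $V^{\otimes k}$ restricts to a $T\rtimes S_n$-equivariant action of $Par^{bal}(k)$, and the resulting algebra homomorphism $Par^{bal}(k)\to\mathrm{End}_{T\rtimes S_n}(V^{\otimes k})$ is surjective for all $n$ and $k$, and is an isomorphism whenever $n\ge k$.
   Context: $V=\mathbb{C}^n$ is the defining representation of $GL_n(\mathbb{C})$ with standard basis $x_1,\dots,x_n$, restricted to $T\rtimes S_n$, where $T$ is the diagonal torus and $S_n$ the permutation matrices. The partition algebra $Par(n,k)$ has basis the set partitions $d$ of $\{1,\dots,k\}\cup\{1',\dots,k'\}$; the product $d_1d_2$ is obtained by stacking the diagrams (identifying the primed vertices of one with the unprimed vertices of the other), taking the induced set partition of the outer vertices, and multiplying by $n^{c}$ where $c$ is the number of connected components lying entirely in the middle row. $Par(n,k)$ acts $S_n$-equivariantly on $V^{\otimes k}$ by letting $d$ send $x_{j_1}\otimes\dots\otimes x_{j_k}$ to $\sum x_{i_1}\otimes\dots\otimes x_{i_k}$, summed over all $(i_1,\dots,i_k)$ such that for any two vertices in the same block of $d$ the corresponding indices (with $i_r$ attached to vertex $r$ and $j_r$ to vertex $r'$) are equal. A set partition of $\{1,\dots,k\}\cup\{1',\dots,k'\}$ is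 balanced if each block $B$ satisfies $|B\cap\{1,\dots,k\}|=|B\cap\{1',\dots,k'\}|$. *)

theory Defs
  imports Complex_Main "HOL-Library.Disjoint_Sets" "HOL-Combinatorics.Permutations"
begin

text \<open>Vertices: Inl r is the unprimed vertex r (top row), Inr r the primed vertex r'
  (bottom row); indices r range over {0..<k} (0-based).\<close>
type_synonym vert = "nat + nat"
type_synonym diag = "vert set set"

definition verts :: "nat \<Rightarrow> vert set" where
  "verts k = Inl ` {..<k} \<union> Inr ` {..<k}"

definition diagrams :: "nat \<Rightarrow> diag set" where
  "diagrams k = {d. partition_on (verts k) d}"

definition balanced :: "diag \<Rightarrow> bool" where
  "balanced d \<longleftrightarrow> (\<forall>B\<in>d. card {r. Inl r \<in> B} = card {r. Inr r \<in> B})"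

definition id_diag :: "nat \<Rightarrow> diag" where
  "id_diag k = (\<lambda>r. {Inl r, Inr r}) ` {..<k}"

text \<open>Three rows of vertices (row, index): d1 occupies rows 0 (unprimed) and 1 (primed),
  d2 occupies rows 1 (unprimed) and 2 (primed); row 1 is the middle row.\<close>

definition top_emb :: "vert \<Rightarrow> nat \<times> nat" where
  "top_emb v = (case v of Inl r \<Rightarrow> (0, r) | Inr r \<Rightarrow> (1, r))"

definition bot_emb :: "vert \<Rightarrow> nat \<times> nat" where
  "bot_emb v = (case v of Inl r \<Rightarrow> (1, r) | Inr r \<Rightarrow> (2, r))"

definition stack_rel :: "diag \<Rightarrow> diag \<Rightarrow> ((nat \<times> nat) \<times> (nat \<times> nat)) set" where
  "stack_rel d1 d2 = (\<Union>B\<in>d1. top_emb ` B \<times> top_emb ` B) \<union> (\<Union>B\<in>d2. bot_emb ` B \<times> bot_emb ` B)"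

definition stack_components :: "nat \<Rightarrow> diag \<Rightarrow> diag \<Rightarrow> (nat \<times> nat) set set" where
  "stack_components k d1 d2 = ({0, 1, 2} \<times> {..<k}) // ((stack_rel d1 d2)\<^sup>*)"

definition outer_part :: "(nat \<times> nat) set \<Rightarrow> vert set" where
  "outer_part C = {Inl r | r. (0, r) \<in> C} \<union> {Inr r | r. (2, r) \<in> C}"

definition diag_comp :: "nat \<Rightarrow> diag \<Rightarrow> diag \<Rightarrow> diag" where
  "diag_comp k d1 d2 = outer_part ` stack_components k d1 d2 - {{}}"

definition middle_count :: "nat \<Rightarrow> diag \<Rightarrow> diag \<Rightarrow> nat" where
  "middle_count k d1 d2 = card {C \<in> stack_components k d1 d2. C \<subseteq> {1} \<times> UNIV}"

type_synonym palg = "diag \<Rightarrow> complex"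

definition in_Par :: "nat \<Rightarrow> palg \<Rightarrow> bool" where
  "in_Par k a \<longleftrightarrow> (\<forall>d. d \<notin> diagrams k \<longrightarrow> a d = 0)"

definition in_Par_bal :: "nat \<Rightarrow> palg \<Rightarrow> bool" where
  "in_Par_bal k a \<longleftrightarrow> (\<forall>d. \<not> (d \<in> diagrams k \<and> balanced d) \<longrightarrow> a d = 0)"

definition par_mult :: "nat \<Rightarrow> nat \<Rightarrow> palg \<Rightarrow> palg \<Rightarrow> palg" where
  "par_mult n k a b = (\<lambda>d. \<Sum>(d1, d2) \<in> {(d1, d2). d1 \<in> diagrams k \<and> d2 \<in> diagrams k \<and> diag_comp k d1 d2 = d}.
       a d1 * b d2 * (of_nat n) ^ middle_count k d1 d2)"

definition par_one :: "nat \<Rightarrow> palg" where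
  "par_one k = (\<lambda>d. if d = id_diag k then 1 else 0)"

text \<open>Basis tensors x_{i_1} \<otimes> ... \<otimes> x_{i_k} are indexed by extensional tuples
  i : {..<k} \<rightarrow> {..<n}; tensors are their coefficient functions.\<close>
definition tuples :: "nat \<Rightarrow> nat \<Rightarrow> (nat \<Rightarrow> nat) set" where
  "tuples n k = Pi\<^sub>E {..<k} (\<lambda>_. {..<n})"

definition Tens :: "nat \<Rightarrow> nat \<Rightarrow> ((nat \<Rightarrow> nat) \<Rightarrow> complex) set" where
  "Tens n k = {v. \<forall>i. i \<notin> tuples n k \<longrightarrow> v i = 0}"

definition tadd :: "((nat \<Rightarrow> nat) \<Rightarrow> complex) \<Rightarrow> ((nat \<Rightarrow> nat) \<Rightarrow> complex) \<Rightarrow> ((nat \<Rightarrow> nat) \<Rightarrow> complex)" where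
  "tadd v w = (\<lambda>i. v i + w i)"

definition tscale :: "complex \<Rightarrow> ((nat \<Rightarrow> nat) \<Rightarrow> complex) \<Rightarrow> ((nat \<Rightarrow> nat) \<Rightarrow> complex)" where
  "tscale c v = (\<lambda>i. c * v i)"

definition idx :: "(nat \<Rightarrow> nat) \<Rightarrow> (nat \<Rightarrow> nat) \<Rightarrow> vert \<Rightarrow> nat" where
  "idx i j v = (case v of Inl r \<Rightarrow> i r | Inr r \<Rightarrow> j r)"

definition diag_entry :: "diag \<Rightarrow> (nat \<Rightarrow> nat) \<Rightarrow> (nat \<Rightarrow> nat) \<Rightarrow> complex" where
  "diag_entry d i j = (if \<forall>B\<in>d. \<forall>u\<in>B. \<forall>w\<in>B. idx i j u = idx i j w then 1 else 0)"

definition diag_act :: "nat \<Rightarrow> nat \<Rightarrow> diag \<Rightarrow> ((nat \<Rightarrow> nat) \<Rightarrow> complex) \<Rightarrow> ((nat \<Rightarrow> nat) \<Rightarrow> complex)" where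
  "diag_act n k d v = (\<lambda>i. if i \<in> tuples n k then (\<Sum>j\<in>tuples n k. diag_entry d i j * v j) else 0)"

definition par_act :: "nat \<Rightarrow> nat \<Rightarrow> palg \<Rightarrow> ((nat \<Rightarrow> nat) \<Rightarrow> complex) \<Rightarrow> ((nat \<Rightarrow> nat) \<Rightarrow> complex)" where
  "par_act n k a v = (\<lambda>i. \<Sum>d\<in>diagrams k. a d * diag_act n k d v i)"

text \<open>Every element of T \<rtimes> S_n is diag(t) * P_sigma with t_x \<noteq> 0 and sigma a permutation of
  {..<n}; it sends x_j to t (sigma j) x_(sigma j).\<close>
definition torus :: "nat \<Rightarrow> (nat \<Rightarrow> complex) set" where
  "torus n = {t. \<forall>x<n. t x \<noteq> 0}"

definition grp_act :: "nat \<Rightarrow> nat \<Rightarrow> (nat \<Rightarrow> complex) \<Rightarrow> (nat \<Rightarrow> nat) \<Rightarrow> ((nat \<Rightarrow> nat) \<Rightarrow> complex) \<Rightarrow> ((nat \<Rightarrow> nat) \<Rightarrow> complex)" where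
  "grp_act n k t \<sigma> v = (\<lambda>i. if i \<in> tuples n k
      then (\<Prod>r<k. t (i r)) * v (restrict (\<lambda>r. inv \<sigma> (i r)) {..<k}) else 0)"

definition equiv_endo :: "nat \<Rightarrow> nat \<Rightarrow> (((nat \<Rightarrow> nat) \<Rightarrow> complex) \<Rightarrow> ((nat \<Rightarrow> nat) \<Rightarrow> complex)) \<Rightarrow> bool" where
  "equiv_endo n k f \<longleftrightarrow>
     (\<forall>v\<in>Tens n k. f v \<in> Tens n k) \<and>
     (\<forall>v\<in>Tens n k. \<forall>w\<in>Tens n k. f (tadd v w) = tadd (f v) (f w)) \<and>
     (\<forall>c. \<forall>v\<in>Tens n k. f (tscale c v) = tscale c (f v)) \<and>
     (\<forall>t\<in>torus n. \<forall>\<sigma>. \<sigma> permutes {..<n} \<longrightarrow>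
        (\<forall>v\<in>Tens n k. f (grp_act n k t \<sigma> v) = grp_act n k t \<sigma> (f v)))"

end

theory Submission
  imports Defs
begin

text \<open>
  A diagram \<open>d\<close> acts on basis tensors through a 0/1 matrix: the entry at \<open>(i, j)\<close> is 1 iff
  labelling the top vertices by \<open>i\<close> and the bottom vertices by \<open>j\<close> is constant on the
  blocks of \<open>d\<close>. If \<open>d1\<close> is balanced, every middle vertex of the stacked picture lies in a
  block of \<open>d1\<close> that also meets the top row. Hence no component lives in the middle row alone
  (the factor \<open>n^c\<close> is 1, so the product does not depend on \<open>n\<close>), and a middle labelling
  compatible with both diagrams is determined by the top labelling, so the matrix of the
  composite is the product of the matrices. A balanced block has as many top as bottom
  vertices, so the two tuples of a compatible pair contain every label equally often and the
  torus acts on both by the same scalar; permutations merely relabel.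

  Conversely, \<open>S_n\<close>-equivariance makes the matrix of an equivariant map depend only on the
  kernel partition of the labelling \<open>(i, j)\<close>, and equivariance under the torus element that
  doubles one coordinate makes it vanish unless that partition is balanced. The matrix of
  \<open>p\<close> is the sum of the indicators of the kernel partitions coarser than \<open>p\<close>, and coarsenings of
  balanced partitions are balanced, so by triangularity each such indicator, hence every
  equivariant map, comes from a balanced element. For \<open>n \<ge> k\<close> every balanced partition has at
  most \<open>k\<close> blocks, each with a top vertex, so it occurs as a kernel partition, and the same
  triangularity gives injectivity.
\<close>

lemma finite_verts [simp]: "finite (verts k)"
  by (simp add: verts_def)

lemma Inl_in_verts [simp]: "Inl r \<in> verts k \<longleftrightarrow> r < k"
  by (auto simp: verts_def)

lemma Inr_in_verts [simp]: "Inr r \<in> verts k \<longleftrightarrow> r < k"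
  by (auto simp: verts_def)

lemma finite_diagrams [simp]: "finite (diagrams k)"
  unfolding diagrams_def by (rule finitely_many_partition_on[OF finite_verts])

lemma diagrams_partition_on: "d \<in> diagrams k \<Longrightarrow> partition_on (verts k) d"
  by (simp add: diagrams_def)

lemma diagram_block_subset: "d \<in> diagrams k \<Longrightarrow> B \<in> d \<Longrightarrow> B \<subseteq> verts k"
  using partition_onD1[OF diagrams_partition_on] by blast

lemma diagram_block_nonempty: "d \<in> diagrams k \<Longrightarrow> B \<in> d \<Longrightarrow> B \<noteq> {}"
  using partition_onD3[OF diagrams_partition_on] by blast

lemma finite_diagram: "d \<in> diagrams k \<Longrightarrow> finite d"
  using finite_elements[OF finite_verts diagrams_partition_on] .

lemma diagram_covers: "d \<in> diagrams k \<Longrightarrow> u \<in> verts k \<Longrightarrow> \<exists>B\<in>d. u \<in> B"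
  using partition_onD1[OF diagrams_partition_on] by blast

lemma diagram_block_unique:
  "d \<in> diagrams k \<Longrightarrow> B \<in> d \<Longrightarrow> B' \<in> d \<Longrightarrow> u \<in> B \<Longrightarrow> u \<in> B' \<Longrightarrow> B = B'"
  using partition_onD2[OF diagrams_partition_on] unfolding disjoint_def by blast

lemma finite_tuples [simp]: "finite (tuples n k)"
  by (simp add: tuples_def finite_PiE)

lemma tuples_less: "i \<in> tuples n k \<Longrightarrow> r < k \<Longrightarrow> i r < n"
  unfolding tuples_def by auto

lemma tuples_eqI: "i \<in> tuples n k \<Longrightarrow> j \<in> tuples n k \<Longrightarrow> (\<And>r. r < k \<Longrightarrow> i r = j r) \<Longrightarrow> i = j"
  unfolding tuples_def by (rule PiE_ext) auto

lemma restrict_in_tuples: "(\<And>r. r < k \<Longrightarrow> f r < n) \<Longrightarrow> restrict f {..<k} \<in> tuples n k"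
  unfolding tuples_def by auto

lemma idx_less: "i \<in> tuples n k \<Longrightarrow> j \<in> tuples n k \<Longrightarrow> u \<in> verts k \<Longrightarrow> idx i j u < n"
  by (cases u) (auto simp: idx_def tuples_less)

definition block_rel :: "diag \<Rightarrow> vert rel" where
  "block_rel d = {(u, w). \<exists>B\<in>d. u \<in> B \<and> w \<in> B}"

definition label_kernel :: "nat \<Rightarrow> (nat \<Rightarrow> nat) \<Rightarrow> (nat \<Rightarrow> nat) \<Rightarrow> vert rel" where
  "label_kernel k i j = {(u, w). u \<in> verts k \<and> w \<in> verts k \<and> idx i j u = idx i j w}"

lemma diag_entry_block_rel:
  assumes "d \<in> diagrams k"
  shows "diag_entry d i j = (if block_rel d \<subseteq> label_kernel k i j then 1 else 0)"
  using diagram_block_subset[OF assms]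
  unfolding diag_entry_def block_rel_def label_kernel_def by (intro if_cong refl) blast

lemma block_rel_subset: "d \<in> diagrams k \<Longrightarrow> block_rel d \<subseteq> verts k \<times> verts k"
  using diagram_block_subset unfolding block_rel_def by blast

lemma quotient_block_rel: "d \<in> diagrams k \<Longrightarrow> verts k // block_rel d = d"
  unfolding block_rel_def by (rule partition_on_eq_quotient[OF diagrams_partition_on])

lemma block_rel_inj: "d \<in> diagrams k \<Longrightarrow> d' \<in> diagrams k \<Longrightarrow> block_rel d = block_rel d' \<Longrightarrow> d = d'"
  using quotient_block_rel by metis

lemma balanced_block_meets_top:
  assumes d: "d \<in> diagrams k" and bal: "balanced d" and B: "B \<in> d"
  shows "\<exists>r<k. Inl r \<in> B"
proof (rule ccontr)
  assume no_top: "\<not> (\<exists>r<k. Inl r \<in> B)"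
  then have "{r. Inl r \<in> B} = {}"
    using diagram_block_subset[OF d B] by auto
  moreover have "card {r. Inr r \<in> B} = card {r. Inl r \<in> B}"
    using bal B unfolding balanced_def by simp
  ultimately have "card {r. Inr r \<in> B} = 0"
    by simp
  moreover have "finite {r. Inr r \<in> B}"
    by (rule finite_subset[of _ "{..<k}"]) (use diagram_block_subset[OF d B] in auto)
  ultimately have "\<forall>r. Inr r \<notin> B" by simp
  with no_top diagram_block_subset[OF d B] have "B = {}"
    by (auto simp: verts_def)
  with diagram_block_nonempty[OF d B] show False ..
qed

lemma balanced_saturated_card:
  assumes d: "d \<in> diagrams k" and bal: "balanced d"
    and saturated: "\<And>B. B \<in> d \<Longrightarrow> B \<subseteq> X \<or> B \<inter> X = {}"
  shows "card {r. Inl r \<in> X \<inter> verts k} = card {r. Inr r \<in> X \<inter> verts k}"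
proof -
  define S where "S = {B \<in> d. B \<subseteq> X}"
  have "finite S"
    using finite_diagram[OF d] by (simp add: S_def)
  have card_row: "card {r. f r \<in> X \<inter> verts k} = (\<Sum>B\<in>S. card {r. f r \<in> B})"
    if "inj f" for f :: "nat \<Rightarrow> vert"
  proof -
    have row_Union: "{r. f r \<in> X \<inter> verts k} = (\<Union>B\<in>S. {r. f r \<in> B})"
    proof (intro equalityI subsetI)
      fix r assume "r \<in> {r. f r \<in> X \<inter> verts k}"
      then obtain B where "B \<in> d" "f r \<in> B" "f r \<in> X"
        using diagram_covers[OF d] by blast
      with saturated have "B \<in> S"
        unfolding S_def by blast
      with \<open>f r \<in> B\<close> show "r \<in> (\<Union>B\<in>S. {r. f r \<in> B})"
        by blast
    next
      fix r assume "r \<in> (\<Union>B\<in>S. {r. f r \<in> B})"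
      then show "r \<in> {r. f r \<in> X \<inter> verts k}"
        using diagram_block_subset[OF d] unfolding S_def by blast
    qed
    have finite_row: "finite {r. f r \<in> B}" if "B \<in> S" for B
    proof -
      have "B \<subseteq> verts k"
        using that diagram_block_subset[OF d] unfolding S_def by blast
      then have "finite B"
        by (rule finite_subset[OF _ finite_verts])
      then show ?thesis
        using finite_vimageI[OF _ \<open>inj f\<close>] by (simp add: vimage_def)
    qed
    have disjoint_rows: "\<forall>B\<in>S. \<forall>B'\<in>S. B \<noteq> B' \<longrightarrow> {r. f r \<in> B} \<inter> {r. f r \<in> B'} = {}"
      using diagram_block_unique[OF d] unfolding S_def by blast
    show ?thesis
      unfolding row_Union using finite_row disjoint_rows by (intro card_UN_disjoint[OF \<open>finite S\<close>]) auto
  qed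
  have "(\<Sum>B\<in>S. card {r. Inl r \<in> B}) = (\<Sum>B\<in>S. card {r. Inr r \<in> B})"
    using bal unfolding balanced_def S_def by simp
  then show ?thesis
    using card_row[of Inl] card_row[of Inr] by simp
qed

section \<open>Stacking two diagrams\<close>

lemma rtrancl_invariant:
  assumes "\<forall>(x, y) \<in> R. f x = f y" and "(x, y) \<in> R\<^sup>*"
  shows "f x = f y"
  using assms(2) by (induction rule: rtrancl_induct) (use assms(1) in auto)

definition outer_vertex :: "vert \<Rightarrow> nat \<times> nat" where
  "outer_vertex u = (case u of Inl r \<Rightarrow> (0, r) | Inr r \<Rightarrow> (2, r))"

definition row_label :: "(nat \<Rightarrow> nat) \<Rightarrow> (nat \<Rightarrow> nat) \<Rightarrow> (nat \<Rightarrow> nat) \<Rightarrow> nat \<times> nat \<Rightarrow> nat" where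
  "row_label i j l x = (if fst x = 0 then i (snd x) else if fst x = 1 then j (snd x) else l (snd x))"

lemma row_label_top_emb: "row_label i j l (top_emb u) = idx i j u"
  by (cases u) (simp_all add: idx_def row_label_def top_emb_def)

lemma row_label_bot_emb: "row_label i j l (bot_emb u) = idx j l u"
  by (cases u) (simp_all add: idx_def row_label_def bot_emb_def)

lemma row_label_outer_vertex: "row_label i j l (outer_vertex u) = idx i l u"
  by (cases u) (simp_all add: idx_def row_label_def outer_vertex_def)

lemma outer_part_iff: "u \<in> outer_part C \<longleftrightarrow> outer_vertex u \<in> C"
  by (cases u) (auto simp: outer_part_def outer_vertex_def)

lemma stack_rel_ball_iff:
  "(\<forall>(x, y) \<in> stack_rel d1 d2. row_label i j l x = row_label i j l y) \<longleftrightarrow>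
     (\<forall>B\<in>d1. \<forall>u\<in>B. \<forall>w\<in>B. idx i j u = idx i j w) \<and> (\<forall>B\<in>d2. \<forall>u\<in>B. \<forall>w\<in>B. idx j l u = idx j l w)"
  unfolding stack_rel_def ball_Un by (auto simp: row_label_top_emb row_label_bot_emb)

locale stacking =
  fixes k :: nat and d1 d2 :: diag
  assumes d1: "d1 \<in> diagrams k" and d2: "d2 \<in> diagrams k"
begin

abbreviation "R \<equiv> stack_rel d1 d2"
abbreviation "grid \<equiv> {0::nat, 1, 2} \<times> {..<k}"
abbreviation "comps \<equiv> stack_components k d1 d2"

lemma stack_rel_sym: "sym R"
  unfolding stack_rel_def sym_def by blast

lemma stack_rel_grid: "R \<subseteq> grid \<times> grid"
proof -
  have "top_emb ` B \<subseteq> grid" if "B \<in> d1" for B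
    using diagram_block_subset[OF d1 that] by (auto simp: verts_def top_emb_def)
  moreover have "bot_emb ` B \<subseteq> grid" if "B \<in> d2" for B
    using diagram_block_subset[OF d2 that] by (auto simp: verts_def bot_emb_def)
  ultimately show ?thesis
    unfolding stack_rel_def by blast
qed

lemma reach_sym: "(x, y) \<in> R\<^sup>* \<Longrightarrow> (y, x) \<in> R\<^sup>*"
  using sym_rtrancl[OF stack_rel_sym] unfolding sym_def by blast

lemma reach_grid: "(x, y) \<in> R\<^sup>* \<Longrightarrow> x \<in> grid \<Longrightarrow> y \<in> grid"
  by (induction rule: rtrancl_induct) (use stack_rel_grid in auto)

lemma outer_vertex_grid: "u \<in> verts k \<Longrightarrow> outer_vertex u \<in> grid"
  by (auto simp: verts_def outer_vertex_def)

lemma component_of_point: "x \<in> grid \<Longrightarrow> R\<^sup>* `` {x} \<in> comps"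
  unfolding stack_components_def by (rule quotientI)

lemma componentE:
  assumes "C \<in> comps"
  obtains x where "x \<in> grid" "C = R\<^sup>* `` {x}"
  using assms unfolding stack_components_def quotient_def by blast

lemma component_subset_grid: "C \<in> comps \<Longrightarrow> C \<subseteq> grid"
  by (metis componentE Image_singleton_iff reach_grid subsetI)

lemma component_mem_iff:
  assumes "C \<in> comps" "x \<in> C"
  shows "y \<in> C \<longleftrightarrow> (x, y) \<in> R\<^sup>*"
proof -
  obtain a where C: "C = R\<^sup>* `` {a}"
    using componentE[OF assms(1)] by blast
  with assms(2) have "(a, x) \<in> R\<^sup>*"
    by blast
  then show ?thesis
    unfolding C Image_singleton_iff using reach_sym rtrancl_trans by metis
qed

lemma partition_on_components: "partition_on grid comps"
proof (rule partition_onI)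
  show "\<Union> comps = grid"
  proof
    show "\<Union> comps \<subseteq> grid"
      using component_subset_grid by blast
    show "grid \<subseteq> \<Union> comps"
    proof
      fix x assume "x \<in> grid"
      then show "x \<in> \<Union> comps"
        using component_of_point[of x] by blast
    qed
  qed
  show "disjnt C C'" if "C \<in> comps" "C' \<in> comps" "C \<noteq> C'" for C C'
  proof (rule ccontr)
    assume "\<not> disjnt C C'"
    then obtain z where z: "z \<in> C" "z \<in> C'"
      unfolding disjnt_def by blast
    have "y \<in> C \<longleftrightarrow> y \<in> C'" for y
      using component_mem_iff[OF that(1) z(1)] component_mem_iff[OF that(2) z(2)] by simp
    then have "C = C'"
      by blast
    with that(3) show False ..
  qed
  show "{} \<notin> comps"
    by (auto elim: componentE)
qed

lemma diag_comp_in_diagrams: "diag_comp k d1 d2 \<in> diagrams k"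
proof -
  have "partition_on (outer_part grid) (outer_part ` comps - {{}})"
  proof (rule partition_on_transform[OF partition_on_components])
    show "\<Union> (outer_part ` comps) = outer_part (\<Union> comps)"
      unfolding outer_part_def by blast
    show "disjnt (outer_part C) (outer_part C')" if "disjnt C C'" for C C'
      using that unfolding disjnt_def outer_part_def by blast
  qed
  moreover have "outer_part grid = verts k"
    unfolding outer_part_def verts_def by auto
  ultimately show ?thesis
    unfolding diagrams_def diag_comp_def by simp
qed

lemma component_saturates:
  assumes C: "C \<in> comps" and linked: "\<And>u w. u \<in> B \<Longrightarrow> w \<in> B \<Longrightarrow> (e u, e w) \<in> R"
  shows "B \<subseteq> e -` C \<or> B \<inter> e -` C = {}"
proof (cases "B \<inter> e -` C = {}")
  case False
  then obtain u where u: "u \<in> B" "e u \<in> C"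
    by blast
  have "e w \<in> C" if "w \<in> B" for w
    using component_mem_iff[OF C u(2)] r_into_rtrancl[OF linked[OF u(1) that]] by simp
  then show ?thesis
    by blast
qed simp

lemma component_row_card:
  assumes C: "C \<in> comps"
  shows "balanced d1 \<Longrightarrow> card {r. (0, r) \<in> C} = card {r. (1, r) \<in> C}"
    and "balanced d2 \<Longrightarrow> card {r. (1, r) \<in> C} = card {r. (2, r) \<in> C}"
proof -
  have rows: "{r. Inl r \<in> top_emb -` C \<inter> verts k} = {r. (0, r) \<in> C}"
    "{r. Inr r \<in> top_emb -` C \<inter> verts k} = {r. (1, r) \<in> C}"
    "{r. Inl r \<in> bot_emb -` C \<inter> verts k} = {r. (1, r) \<in> C}"
    "{r. Inr r \<in> bot_emb -` C \<inter> verts k} = {r. (2, r) \<in> C}"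
    using component_subset_grid[OF C] by (auto simp: top_emb_def bot_emb_def)
  show "card {r. (0, r) \<in> C} = card {r. (1, r) \<in> C}" if "balanced d1"
  proof -
    have "\<And>B. B \<in> d1 \<Longrightarrow> B \<subseteq> top_emb -` C \<or> B \<inter> top_emb -` C = {}"
      by (rule component_saturates[OF C]) (unfold stack_rel_def, blast)
    from balanced_saturated_card[OF d1 that this] show ?thesis
      using rows by simp
  qed
  show "card {r. (1, r) \<in> C} = card {r. (2, r) \<in> C}" if "balanced d2"
  proof -
    have "\<And>B. B \<in> d2 \<Longrightarrow> B \<subseteq> bot_emb -` C \<or> B \<inter> bot_emb -` C = {}"
      by (rule component_saturates[OF C]) (unfold stack_rel_def, blast)
    from balanced_saturated_card[OF d2 that this] show ?thesis
      using rows by simp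
  qed
qed

lemma balanced_diag_comp:
  assumes "balanced d1" "balanced d2"
  shows "balanced (diag_comp k d1 d2)"
  unfolding balanced_def
proof
  fix B assume "B \<in> diag_comp k d1 d2"
  then obtain C where C: "C \<in> comps" "B = outer_part C"
    unfolding diag_comp_def by blast
  then have "{r. Inl r \<in> B} = {r. (0, r) \<in> C}" "{r. Inr r \<in> B} = {r. (2, r) \<in> C}"
    unfolding outer_part_def by auto
  with component_row_card[OF C(1)] assms show "card {r. Inl r \<in> B} = card {r. Inr r \<in> B}"
    by simp
qed

lemma middle_linked_to_top:
  assumes "balanced d1" "r < k"
  obtains r' where "r' < k" "((1, r), (0, r')) \<in> R"
proof -
  obtain B where B: "B \<in> d1" "Inr r \<in> B"
    using diagram_covers[OF d1, of "Inr r"] assms(2) by auto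
  obtain r' where "r' < k" "Inl r' \<in> B"
    using balanced_block_meets_top[OF d1 assms(1) B(1)] by blast
  moreover have "(top_emb (Inr r), top_emb (Inl r')) \<in> R"
    using B \<open>Inl r' \<in> B\<close> unfolding stack_rel_def by blast
  ultimately show ?thesis
    using that by (simp add: top_emb_def)
qed

lemma middle_count_zero:
  assumes "balanced d1"
  shows "middle_count k d1 d2 = 0"
proof -
  have "\<not> C \<subseteq> {1} \<times> UNIV" if C: "C \<in> comps" for C
  proof
    assume middle: "C \<subseteq> {1} \<times> UNIV"
    obtain x where "x \<in> grid" "C = R\<^sup>* `` {x}"
      using componentE[OF C] by blast
    then have "x \<in> C"
      by blast
    have "snd x < k"
      using \<open>x \<in> grid\<close> by (simp add: mem_Times_iff)
    have "fst x = 1"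
      using subsetD[OF middle \<open>x \<in> C\<close>] by (simp add: mem_Times_iff)
    with \<open>x \<in> C\<close> have "(1, snd x) \<in> C"
      by (metis prod.collapse)
    obtain r' where "((1, snd x), (0, r')) \<in> R"
      using middle_linked_to_top[OF assms \<open>snd x < k\<close>] by blast
    then have "(0, r') \<in> C"
      by (intro component_mem_iff[OF C \<open>(1, snd x) \<in> C\<close>, THEN iffD2] r_into_rtrancl)
    then show False
      using middle by (auto simp: mem_Times_iff)
  qed
  then have "{C \<in> comps. C \<subseteq> {1} \<times> UNIV} = {}"
    by blast
  then show ?thesis
    unfolding middle_count_def by (simp only: card.empty)
qed

definition compatible :: "(nat \<Rightarrow> nat) \<Rightarrow> (nat \<Rightarrow> nat) \<Rightarrow> (nat \<Rightarrow> nat) \<Rightarrow> bool" where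
  "compatible i j l \<longleftrightarrow> (\<forall>(x, y) \<in> R. row_label i j l x = row_label i j l y)"

definition outer_compatible :: "(nat \<Rightarrow> nat) \<Rightarrow> (nat \<Rightarrow> nat) \<Rightarrow> bool" where
  "outer_compatible i l \<longleftrightarrow>
     (\<forall>u\<in>verts k. \<forall>w\<in>verts k. (outer_vertex u, outer_vertex w) \<in> R\<^sup>* \<longrightarrow> idx i l u = idx i l w)"

lemma diag_entry_mult_compatible:
  "diag_entry d1 i j * diag_entry d2 j l = (if compatible i j l then 1 else 0)"
  unfolding diag_entry_def compatible_def stack_rel_ball_iff
  by (simp only: of_bool_def[symmetric] of_bool_conj)

lemma block_rel_diag_comp:
  "block_rel (diag_comp k d1 d2) =
     {(u, w). u \<in> verts k \<and> w \<in> verts k \<and> (outer_vertex u, outer_vertex w) \<in> R\<^sup>*}"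
proof (intro equalityI subsetI)
  fix p assume "p \<in> block_rel (diag_comp k d1 d2)"
  then obtain u w B where p: "p = (u, w)" "B \<in> diag_comp k d1 d2" "u \<in> B" "w \<in> B"
    unfolding block_rel_def by blast
  then obtain C where C: "C \<in> comps" "B = outer_part C"
    unfolding diag_comp_def by blast
  have "u \<in> verts k" "w \<in> verts k"
    using diagram_block_subset[OF diag_comp_in_diagrams p(2)] p(3,4) by blast+
  moreover have "outer_vertex u \<in> C" "outer_vertex w \<in> C"
    using p(3,4) C(2) outer_part_iff by blast+
  then have "(outer_vertex u, outer_vertex w) \<in> R\<^sup>*"
    using component_mem_iff[OF C(1)] by blast
  ultimately show "p \<in> {(u, w). u \<in> verts k \<and> w \<in> verts k \<and> (outer_vertex u, outer_vertex w) \<in> R\<^sup>*}"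
    using p(1) by simp
next
  fix p assume "p \<in> {(u, w). u \<in> verts k \<and> w \<in> verts k \<and> (outer_vertex u, outer_vertex w) \<in> R\<^sup>*}"
  then obtain u w where p: "p = (u, w)" "u \<in> verts k" "(outer_vertex u, outer_vertex w) \<in> R\<^sup>*"
    by blast
  define C where "C = R\<^sup>* `` {outer_vertex u}"
  have "C \<in> comps"
    unfolding C_def by (rule component_of_point[OF outer_vertex_grid[OF p(2)]])
  moreover have "u \<in> outer_part C" "w \<in> outer_part C"
    using p(3) unfolding C_def outer_part_iff by auto
  ultimately have "outer_part C \<in> diag_comp k d1 d2"
    unfolding diag_comp_def by blast
  with \<open>u \<in> outer_part C\<close> \<open>w \<in> outer_part C\<close> show "p \<in> block_rel (diag_comp k d1 d2)"
    unfolding block_rel_def p(1) by blast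
qed

lemma diag_entry_diag_comp:
  "diag_entry (diag_comp k d1 d2) i l = (if outer_compatible i l then 1 else 0)"
  unfolding diag_entry_block_rel[OF diag_comp_in_diagrams] block_rel_diag_comp
    outer_compatible_def label_kernel_def by (intro if_cong refl) blast

lemma compatible_imp_outer_compatible:
  assumes "compatible i j l"
  shows "outer_compatible i l"
  unfolding outer_compatible_def
proof (intro ballI impI)
  fix u w assume "(outer_vertex u, outer_vertex w) \<in> R\<^sup>*"
  with rtrancl_invariant[OF assms[unfolded compatible_def]]
  show "idx i l u = idx i l w"
    by (metis row_label_outer_vertex)
qed

lemma compatible_middle_unique:
  assumes "balanced d1" "j \<in> tuples n k" "j' \<in> tuples n k"
    and "compatible i j l" "compatible i j' l"
  shows "j = j'"
proof (rule tuples_eqI[OF assms(2,3)])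
  fix r assume "r < k"
  then obtain r' where "((1, r), (0, r')) \<in> R"
    using middle_linked_to_top[OF assms(1)] by blast
  then have "row_label i j l (1, r) = row_label i j l (0, r')"
    "row_label i j' l (1, r) = row_label i j' l (0, r')"
    using assms(4,5) unfolding compatible_def by auto
  then show "j r = j' r"
    by (simp add: row_label_def)
qed

lemma compatible_middle_exists:
  assumes bal: "balanced d1" and i: "i \<in> tuples n k" and outer: "outer_compatible i l"
  obtains j where "j \<in> tuples n k" "compatible i j l"
proof -
  define top where "top r = (SOME r'. r' < k \<and> ((1, r), (0, r')) \<in> R)" for r
  have top: "top r < k \<and> ((1, r), (0, top r)) \<in> R" if "r < k" for r
  proof -
    have "\<exists>r'. r' < k \<and> ((1, r), (0, r')) \<in> R"
      using middle_linked_to_top[OF bal that] by blast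
    then show ?thesis
      unfolding top_def by (rule someI_ex)
  qed
  define j where "j = restrict (\<lambda>r. i (top r)) {..<k}"
  have j: "j \<in> tuples n k"
    unfolding j_def by (rule restrict_in_tuples) (use top tuples_less[OF i] in blast)
  \<comment> \<open>every grid point is joined to an outer vertex carrying its label\<close>
  define seen where
    "seen x = (if fst x = 0 then Inl (snd x) else if fst x = 1 then Inl (top (snd x)) else Inr (snd x))"
    for x :: "nat \<times> nat"
  have seen: "seen x \<in> verts k \<and> (x, outer_vertex (seen x)) \<in> R\<^sup>* \<and> row_label i j l x = idx i l (seen x)"
    if "x \<in> grid" for x
  proof -
    obtain a r where x: "x = (a, r)"
      by (cases x)
    with that have "a \<in> {0, 1, 2}" "r < k"
      by auto
    with x show ?thesis
      using top[OF \<open>r < k\<close>]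
      by (auto simp: seen_def outer_vertex_def row_label_def idx_def j_def)
  qed
  have "compatible i j l"
    unfolding compatible_def
  proof clarify
    fix x y assume "(x, y) \<in> R"
    then have "x \<in> grid" "y \<in> grid"
      using stack_rel_grid by blast+
    have "(outer_vertex (seen x), outer_vertex (seen y)) \<in> R\<^sup>*"
      using seen[OF \<open>x \<in> grid\<close>] seen[OF \<open>y \<in> grid\<close>] \<open>(x, y) \<in> R\<close>
      by (meson reach_sym r_into_rtrancl rtrancl_trans)
    then show "row_label i j l x = row_label i j l y"
      using outer seen[OF \<open>x \<in> grid\<close>] seen[OF \<open>y \<in> grid\<close>] unfolding outer_compatible_def by simp
  qed
  with j that show ?thesis
    by blast
qed

lemma diag_entry_diag_comp_sum:
  assumes "balanced d1" "i \<in> tuples n k"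
  shows "(\<Sum>j\<in>tuples n k. diag_entry d1 i j * diag_entry d2 j l) = diag_entry (diag_comp k d1 d2) i l"
proof -
  have "(\<Sum>j\<in>tuples n k. diag_entry d1 i j * diag_entry d2 j l) =
      of_nat (card {j \<in> tuples n k. compatible i j l})"
    by (simp add: diag_entry_mult_compatible sum.If_cases Int_def)
  also have "card {j \<in> tuples n k. compatible i j l} = (if outer_compatible i l then 1 else 0)"
  proof (cases "outer_compatible i l")
    case True
    then obtain j where "j \<in> tuples n k" "compatible i j l"
      using compatible_middle_exists[OF assms] by blast
    then have "{j \<in> tuples n k. compatible i j l} = {j}"
      using compatible_middle_unique[OF assms(1)] by blast
    with True show ?thesis
      by simp
  next
    case False
    then have "{j \<in> tuples n k. compatible i j l} = {}"
      using compatible_imp_outer_compatible by blast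
    with False show ?thesis
      by simp
  qed
  finally show ?thesis
    by (simp add: diag_entry_diag_comp)
qed

end

lemma diag_comp_in_diagrams:
  "d1 \<in> diagrams k \<Longrightarrow> d2 \<in> diagrams k \<Longrightarrow> diag_comp k d1 d2 \<in> diagrams k"
  by (rule stacking.diag_comp_in_diagrams[OF stacking.intro])

lemma balanced_diag_comp:
  "d1 \<in> diagrams k \<Longrightarrow> d2 \<in> diagrams k \<Longrightarrow> balanced d1 \<Longrightarrow> balanced d2 \<Longrightarrow>
    balanced (diag_comp k d1 d2)"
  by (rule stacking.balanced_diag_comp[OF stacking.intro])

lemma middle_count_balanced:
  "d1 \<in> diagrams k \<Longrightarrow> d2 \<in> diagrams k \<Longrightarrow> balanced d1 \<Longrightarrow> middle_count k d1 d2 = 0"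
  by (rule stacking.middle_count_zero[OF stacking.intro])

lemma diag_entry_diag_comp_sum:
  "d1 \<in> diagrams k \<Longrightarrow> d2 \<in> diagrams k \<Longrightarrow> balanced d1 \<Longrightarrow> i \<in> tuples n k \<Longrightarrow>
    (\<Sum>j\<in>tuples n k. diag_entry d1 i j * diag_entry d2 j l) = diag_entry (diag_comp k d1 d2) i l"
  by (rule stacking.diag_entry_diag_comp_sum[OF stacking.intro])

section \<open>The balanced subalgebra and its action\<close>

lemma in_Par_bal_support: "in_Par_bal k a \<Longrightarrow> a d \<noteq> 0 \<Longrightarrow> d \<in> diagrams k \<and> balanced d"
  unfolding in_Par_bal_def by blast

lemma in_Par_bal_par_mult:
  assumes a: "in_Par_bal k a" and b: "in_Par_bal k b"
  shows "in_Par_bal k (par_mult n k a b)"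
  unfolding in_Par_bal_def
proof (intro allI impI)
  fix d assume d: "\<not> (d \<in> diagrams k \<and> balanced d)"
  have "a d1 * b d2 = 0" if "d1 \<in> diagrams k" "d2 \<in> diagrams k" "diag_comp k d1 d2 = d" for d1 d2
  proof (rule ccontr)
    assume "a d1 * b d2 \<noteq> 0"
    then have "balanced d1" "balanced d2"
      using in_Par_bal_support[OF a] in_Par_bal_support[OF b] by auto
    then have "diag_comp k d1 d2 \<in> diagrams k \<and> balanced (diag_comp k d1 d2)"
      using diag_comp_in_diagrams[OF that(1,2)] balanced_diag_comp[OF that(1,2)] by blast
    with that(3) d show False
      by simp
  qed
  then show "par_mult n k a b d = 0"
    unfolding par_mult_def by (intro sum.neutral) auto
qed

lemma par_mult_indep_of_n:
  assumes "in_Par_bal k a"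
  shows "par_mult n k a b = par_mult m k a b"
  unfolding par_mult_def
proof (intro ext sum.cong refl, clarify)
  fix d1 d2 assume "d1 \<in> diagrams k" "d2 \<in> diagrams k"
  show "a d1 * b d2 * of_nat n ^ middle_count k d1 d2 = a d1 * b d2 * of_nat m ^ middle_count k d1 d2"
  proof (cases "a d1 = 0")
    case False
    then have "balanced d1"
      using in_Par_bal_support[OF assms] by blast
    with \<open>d1 \<in> diagrams k\<close> \<open>d2 \<in> diagrams k\<close> show ?thesis
      by (simp add: middle_count_balanced)
  qed simp
qed

lemma id_diag_in_diagrams: "id_diag k \<in> diagrams k"
  unfolding diagrams_def id_diag_def
  by (auto simp: verts_def disjnt_def intro!: partition_onI)

lemma balanced_id_diag: "balanced (id_diag k)"
proof -
  have "{r'. Inl r' \<in> {Inl r, Inr r}} = {r}" "{r'. Inr r' \<in> {Inl r, Inr r}} = {r}" for r :: nat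
    by auto
  then show ?thesis
    unfolding balanced_def id_diag_def by simp
qed

lemma in_Par_bal_par_one: "in_Par_bal k (par_one k)"
  unfolding in_Par_bal_def par_one_def using id_diag_in_diagrams balanced_id_diag by auto

lemma diag_act_outside: "i \<notin> tuples n k \<Longrightarrow> diag_act n k d v i = 0"
  by (simp add: diag_act_def)

lemma diag_act_inside: "i \<in> tuples n k \<Longrightarrow> diag_act n k d v i = (\<Sum>j\<in>tuples n k. diag_entry d i j * v j)"
  by (simp add: diag_act_def)

lemma diag_act_linear:
  assumes "finite S"
  shows "diag_act n k d (\<lambda>j. \<Sum>x\<in>S. c x * w x j) i = (\<Sum>x\<in>S. c x * diag_act n k d (w x) i)"
proof (cases "i \<in> tuples n k")
  case True
  have "diag_act n k d (\<lambda>j. \<Sum>x\<in>S. c x * w x j) i =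
      (\<Sum>j\<in>tuples n k. \<Sum>x\<in>S. diag_entry d i j * (c x * w x j))"
    using True by (simp add: diag_act_inside sum_distrib_left)
  also have "\<dots> = (\<Sum>x\<in>S. \<Sum>j\<in>tuples n k. diag_entry d i j * (c x * w x j))"
    by (rule sum.swap)
  also have "\<dots> = (\<Sum>x\<in>S. c x * diag_act n k d (w x) i)"
    using True by (simp add: diag_act_inside sum_distrib_left mult.left_commute)
  finally show ?thesis .
qed (simp add: diag_act_outside)

lemma diag_act_diag_comp:
  assumes "d1 \<in> diagrams k" "d2 \<in> diagrams k" "balanced d1"
  shows "diag_act n k (diag_comp k d1 d2) v i = diag_act n k d1 (diag_act n k d2 v) i"
proof (cases "i \<in> tuples n k")
  case True
  have "diag_act n k d1 (diag_act n k d2 v) i =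
      (\<Sum>j\<in>tuples n k. \<Sum>l\<in>tuples n k. diag_entry d1 i j * diag_entry d2 j l * v l)"
    using True by (simp add: diag_act_inside sum_distrib_left mult.assoc)
  also have "\<dots> = (\<Sum>l\<in>tuples n k. (\<Sum>j\<in>tuples n k. diag_entry d1 i j * diag_entry d2 j l) * v l)"
    by (subst sum.swap) (simp add: sum_distrib_right)
  also have "\<dots> = (\<Sum>l\<in>tuples n k. diag_entry (diag_comp k d1 d2) i l * v l)"
    using diag_entry_diag_comp_sum[OF assms True] by simp
  finally show ?thesis
    using True by (simp add: diag_act_inside)
qed (simp add: diag_act_outside)

lemma par_act_par_mult_expand:
  "par_act n k (par_mult n k a b) v i =
     (\<Sum>(d1, d2)\<in>diagrams k \<times> diagrams k.
        a d1 * b d2 * of_nat n ^ middle_count k d1 d2 * diag_act n k (diag_comp k d1 d2) v i)"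
proof -
  let ?c = "\<lambda>(d1, d2). diag_comp k d1 d2"
  let ?h = "\<lambda>(d1, d2). a d1 * b d2 * of_nat n ^ middle_count k d1 d2 * diag_act n k (diag_comp k d1 d2) v i"
  have fibre: "{(d1, d2). d1 \<in> diagrams k \<and> d2 \<in> diagrams k \<and> diag_comp k d1 d2 = d} =
      {p. p \<in> diagrams k \<times> diagrams k \<and> ?c p = d}" for d
    by auto
  have "par_act n k (par_mult n k a b) v i =
      (\<Sum>d\<in>diagrams k. \<Sum>p\<in>{p. p \<in> diagrams k \<times> diagrams k \<and> ?c p = d}. ?h p)"
    unfolding par_act_def par_mult_def fibre sum_distrib_right
    by (intro sum.cong refl) auto
  also have "\<dots> = (\<Sum>p\<in>diagrams k \<times> diagrams k. ?h p)"
    by (rule sum.group) (auto intro: diag_comp_in_diagrams)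
  finally show ?thesis .
qed

lemma par_act_par_mult:
  assumes "in_Par_bal k a"
  shows "par_act n k (par_mult n k a b) v = par_act n k a (par_act n k b v)"
proof
  fix i
  have "par_act n k (par_mult n k a b) v i =
      (\<Sum>(d1, d2)\<in>diagrams k \<times> diagrams k. a d1 * b d2 * diag_act n k d1 (diag_act n k d2 v) i)"
    unfolding par_act_par_mult_expand
  proof (intro sum.cong refl, clarify)
    fix d1 d2 assume d: "d1 \<in> diagrams k" "d2 \<in> diagrams k"
    show "a d1 * b d2 * of_nat n ^ middle_count k d1 d2 * diag_act n k (diag_comp k d1 d2) v i =
        a d1 * b d2 * diag_act n k d1 (diag_act n k d2 v) i"
    proof (cases "a d1 = 0")
      case False
      then have "balanced d1"
        using in_Par_bal_support[OF assms] by blast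
      with d show ?thesis
        by (simp add: middle_count_balanced diag_act_diag_comp)
    qed simp
  qed
  also have "\<dots> = (\<Sum>d1\<in>diagrams k. a d1 * diag_act n k d1 (\<lambda>j. \<Sum>d2\<in>diagrams k. b d2 * diag_act n k d2 v j) i)"
    by (simp add: sum.cartesian_product[symmetric] diag_act_linear sum_distrib_left mult.assoc)
  also have "\<dots> = par_act n k a (par_act n k b v) i"
    unfolding par_act_def ..
  finally show "par_act n k (par_mult n k a b) v i = par_act n k a (par_act n k b v) i" .
qed

lemma diag_entry_id_diag:
  assumes "i \<in> tuples n k" "j \<in> tuples n k"
  shows "diag_entry (id_diag k) i j = of_bool (j = i)"
proof -
  have "(\<forall>B\<in>id_diag k. \<forall>u\<in>B. \<forall>w\<in>B. idx i j u = idx i j w) \<longleftrightarrow> (\<forall>r<k. i r = j r)"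
    unfolding id_diag_def by (auto simp: idx_def)
  also have "\<dots> \<longleftrightarrow> j = i"
    using tuples_eqI[OF assms] by auto
  finally show ?thesis
    unfolding diag_entry_def by simp
qed

lemma diag_act_id_diag:
  assumes "v \<in> Tens n k"
  shows "diag_act n k (id_diag k) v = v"
proof
  fix i
  show "diag_act n k (id_diag k) v i = v i"
  proof (cases "i \<in> tuples n k")
    case True
    then show ?thesis
      by (simp add: diag_act_inside diag_entry_id_diag cong: sum.cong)
  next
    case False
    with assms show ?thesis
      by (simp add: diag_act_outside Tens_def)
  qed
qed

lemma par_act_par_one:
  assumes "v \<in> Tens n k"
  shows "par_act n k (par_one k) v = v"
proof -
  have "par_act n k (par_one k) v = diag_act n k (id_diag k) v"
    unfolding par_act_def par_one_def of_bool_def[symmetric] using id_diag_in_diagrams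
    by (simp add: Int_absorb1)
  then show ?thesis
    by (simp add: diag_act_id_diag[OF assms])
qed

section \<open>Equivariance under $T \<rtimes> S_n$\<close>

definition relabel :: "nat \<Rightarrow> (nat \<Rightarrow> nat) \<Rightarrow> (nat \<Rightarrow> nat) \<Rightarrow> nat \<Rightarrow> nat" where
  "relabel k f i = restrict (\<lambda>r. f (i r)) {..<k}"

lemma relabel_in_tuples:
  "(\<And>x. x < n \<Longrightarrow> f x < n) \<Longrightarrow> i \<in> tuples n k \<Longrightarrow> relabel k f i \<in> tuples n k"
  unfolding relabel_def by (rule restrict_in_tuples) (use tuples_less in blast)

lemma relabel_relabel:
  "i \<in> tuples n k \<Longrightarrow> (\<And>x. x < n \<Longrightarrow> g (f x) = x) \<Longrightarrow> relabel k g (relabel k f i) = i"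
  by (rule tuples_eqI[of _ n k])
    (auto simp: relabel_def tuples_less intro: restrict_in_tuples)

lemma permutes_less: "\<sigma> permutes {..<n} \<Longrightarrow> x < n \<Longrightarrow> \<sigma> x < n"
  using permutes_in_image[of \<sigma> "{..<n}" x] by simp

lemma bij_betw_relabel:
  assumes "\<sigma> permutes {..<n}"
  shows "bij_betw (relabel k \<sigma>) (tuples n k) (tuples n k)"
proof (rule bij_betw_byWitness[where f' = "relabel k (inv \<sigma>)"])
  have inv: "inv \<sigma> permutes {..<n}"
    using permutes_inv[OF assms] .
  show "\<forall>i\<in>tuples n k. relabel k (inv \<sigma>) (relabel k \<sigma> i) = i"
    using relabel_relabel permutes_inverses(2)[OF assms] by blast
  show "\<forall>i\<in>tuples n k. relabel k \<sigma> (relabel k (inv \<sigma>) i) = i"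
    using relabel_relabel permutes_inverses(1)[OF assms] by blast
  show "relabel k \<sigma> ` tuples n k \<subseteq> tuples n k"
    using relabel_in_tuples permutes_less[OF assms] by blast
  show "relabel k (inv \<sigma>) ` tuples n k \<subseteq> tuples n k"
    using relabel_in_tuples permutes_less[OF inv] by blast
qed

lemma label_kernel_relabel:
  assumes "inj f"
  shows "label_kernel k (relabel k f i) (relabel k f j) = label_kernel k i j"
proof -
  have "idx (relabel k f i) (relabel k f j) u = f (idx i j u)" if "u \<in> verts k" for u
    using that by (cases u) (auto simp: idx_def relabel_def)
  then show ?thesis
    unfolding label_kernel_def using inj_eq[OF assms] by auto
qed

lemma diag_entry_relabel:
  "d \<in> diagrams k \<Longrightarrow> inj f \<Longrightarrow> diag_entry d (relabel k f i) (relabel k f j) = diag_entry d i j"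
  by (simp add: diag_entry_block_rel label_kernel_relabel)

lemma prod_eq_if_fibre_cards_eq:
  fixes t :: "'b \<Rightarrow> 'c::comm_monoid_mult"
  assumes "finite A" "finite B" and cards: "\<And>x. card {r \<in> A. f r = x} = card {r \<in> B. g r = x}"
  shows "(\<Prod>r\<in>A. t (f r)) = (\<Prod>r\<in>B. t (g r))"
proof -
  have "x \<in> f ` A \<longleftrightarrow> x \<in> g ` B" for x
  proof -
    have "x \<in> f ` A \<longleftrightarrow> card {r \<in> A. f r = x} \<noteq> 0"
      using \<open>finite A\<close> by auto
    also have "\<dots> \<longleftrightarrow> x \<in> g ` B"
      unfolding cards using \<open>finite B\<close> by auto
    finally show ?thesis .
  qed
  then have image: "f ` A = g ` B"
    by blast
  have "(\<Prod>r\<in>A. t (f r)) = (\<Prod>x\<in>f ` A. t x ^ card {r \<in> A. f r = x})"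
    by (subst prod.image_gen[OF \<open>finite A\<close>, of _ f]) simp
  also have "\<dots> = (\<Prod>x\<in>g ` B. t x ^ card {r \<in> B. g r = x})"
    unfolding image cards ..
  also have "\<dots> = (\<Prod>r\<in>B. t (g r))"
    by (subst prod.image_gen[OF \<open>finite B\<close>, of _ g]) simp
  finally show ?thesis .
qed

lemma balanced_label_counts:
  assumes d: "d \<in> diagrams k" and bal: "balanced d"
    and compat: "block_rel d \<subseteq> label_kernel k i j"
  shows "card {r. r < k \<and> i r = x} = card {r. r < k \<and> j r = x}"
proof -
  let ?X = "{u. idx i j u = x}"
  have "B \<subseteq> ?X \<or> B \<inter> ?X = {}" if "B \<in> d" for B
    using compat that unfolding block_rel_def label_kernel_def by blast
  from balanced_saturated_card[OF d bal this] show ?thesis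
    by (simp add: idx_def Collect_conj_eq Int_commute lessThan_def)
qed

lemma grp_act_inside:
  "i \<in> tuples n k \<Longrightarrow> grp_act n k t \<sigma> v i = (\<Prod>r<k. t (i r)) * v (relabel k (inv \<sigma>) i)"
  by (simp add: grp_act_def relabel_def)

lemma grp_act_outside: "i \<notin> tuples n k \<Longrightarrow> grp_act n k t \<sigma> v i = 0"
  by (simp add: grp_act_def)

lemma diag_act_grp_act:
  assumes d: "d \<in> diagrams k" and bal: "balanced d" and \<sigma>: "\<sigma> permutes {..<n}"
  shows "diag_act n k d (grp_act n k t \<sigma> v) i = grp_act n k t \<sigma> (diag_act n k d v) i"
proof (cases "i \<in> tuples n k")
  case True
  let ?p = "relabel k (inv \<sigma>)"
  have bij: "bij_betw ?p (tuples n k) (tuples n k)"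
    by (rule bij_betw_relabel[OF permutes_inv[OF \<sigma>]])
  have inj: "inj (inv \<sigma>)"
    using permutes_inj[OF permutes_inv[OF \<sigma>]] .
  have weight: "diag_entry d i j * (\<Prod>r<k. t (j r)) = diag_entry d i j * (\<Prod>r<k. t (i r))" for j
  proof (cases "block_rel d \<subseteq> label_kernel k i j")
    case True
    have "(\<Prod>r\<in>{..<k}. t (i r)) = (\<Prod>r\<in>{..<k}. t (j r))"
      by (rule prod_eq_if_fibre_cards_eq[where f = i and g = j]) (simp_all add: balanced_label_counts[OF d bal True])
    then show ?thesis
      by simp
  qed (simp add: diag_entry_block_rel[OF d])
  have "grp_act n k t \<sigma> (diag_act n k d v) i =
      (\<Prod>r<k. t (i r)) * (\<Sum>j\<in>tuples n k. diag_entry d (?p i) j * v j)"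
    using True bij_betwE[OF bij] by (simp add: grp_act_inside diag_act_inside)
  also have "(\<Sum>j\<in>tuples n k. diag_entry d (?p i) j * v j) =
      (\<Sum>j\<in>tuples n k. diag_entry d (?p i) (?p j) * v (?p j))"
    by (rule sum.reindex_bij_betw[symmetric, OF bij])
  also have "\<dots> = (\<Sum>j\<in>tuples n k. diag_entry d i j * v (?p j))"
    using diag_entry_relabel[OF d inj] by simp
  also have "(\<Prod>r<k. t (i r)) * \<dots> = (\<Sum>j\<in>tuples n k. diag_entry d i j * ((\<Prod>r<k. t (j r)) * v (?p j)))"
    unfolding sum_distrib_left by (intro sum.cong refl) (metis weight mult.commute mult.left_commute)
  also have "\<dots> = diag_act n k d (grp_act n k t \<sigma> v) i"
    using True by (simp add: diag_act_inside grp_act_inside)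
  finally show ?thesis ..
qed (simp add: diag_act_outside grp_act_outside)

lemma equiv_endo_par_act:
  assumes a: "in_Par_bal k a"
  shows "equiv_endo n k (par_act n k a)"
  unfolding equiv_endo_def
proof (intro conjI ballI allI impI)
  fix v :: "(nat \<Rightarrow> nat) \<Rightarrow> complex"
  show "par_act n k a v \<in> Tens n k"
    unfolding Tens_def par_act_def by (simp add: diag_act_outside)
next
  fix v w :: "(nat \<Rightarrow> nat) \<Rightarrow> complex"
  have "diag_act n k d (tadd v w) i = diag_act n k d v i + diag_act n k d w i" for d i
    by (cases "i \<in> tuples n k") (simp_all add: diag_act_def tadd_def distrib_left sum.distrib)
  then show "par_act n k a (tadd v w) = tadd (par_act n k a v) (par_act n k a w)"
    by (simp add: par_act_def tadd_def distrib_left sum.distrib)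
next
  fix c v
  have "diag_act n k d (tscale c v) i = c * diag_act n k d v i" for d i
    by (cases "i \<in> tuples n k") (simp_all add: diag_act_def tscale_def sum_distrib_left mult.left_commute)
  then show "par_act n k a (tscale c v) = tscale c (par_act n k a v)"
    by (simp add: par_act_def tscale_def sum_distrib_left mult.left_commute)
next
  fix t \<sigma> v
  assume \<sigma>: "\<sigma> permutes {..<n}"
  show "par_act n k a (grp_act n k t \<sigma> v) = grp_act n k t \<sigma> (par_act n k a v)"
  proof
    fix i
    have "a d * diag_act n k d (grp_act n k t \<sigma> v) i = a d * grp_act n k t \<sigma> (diag_act n k d v) i"
      if "d \<in> diagrams k" for d
      using diag_act_grp_act[OF that _ \<sigma>] in_Par_bal_support[OF a, of d] by (cases "a d = 0") auto
    then have "par_act n k a (grp_act n k t \<sigma> v) i =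
        (\<Sum>d\<in>diagrams k. a d * grp_act n k t \<sigma> (diag_act n k d v) i)"
      unfolding par_act_def by (rule sum.cong[OF refl])
    also have "\<dots> = grp_act n k t \<sigma> (par_act n k a v) i"
      unfolding par_act_def
      by (cases "i \<in> tuples n k") (simp_all add: grp_act_inside grp_act_outside sum_distrib_left mult.left_commute)
    finally show "par_act n k a (grp_act n k t \<sigma> v) i = grp_act n k t \<sigma> (par_act n k a v) i" .
  qed
qed

section \<open>Surjectivity\<close>

definition par_matrix :: "nat \<Rightarrow> palg \<Rightarrow> (nat \<Rightarrow> nat) \<Rightarrow> (nat \<Rightarrow> nat) \<Rightarrow> complex" where
  "par_matrix k a i j = (\<Sum>d\<in>diagrams k. a d * diag_entry d i j)"

definition basis_tensor :: "(nat \<Rightarrow> nat) \<Rightarrow> (nat \<Rightarrow> nat) \<Rightarrow> complex" where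
  "basis_tensor j = (\<lambda>i. of_bool (i = j))"

lemma basis_tensor_in_Tens: "j \<in> tuples n k \<Longrightarrow> basis_tensor j \<in> Tens n k"
  unfolding basis_tensor_def Tens_def by auto

lemma par_act_inside:
  "i \<in> tuples n k \<Longrightarrow> par_act n k a v i = (\<Sum>j\<in>tuples n k. par_matrix k a i j * v j)"
  unfolding par_act_def par_matrix_def
  by (simp add: diag_act_inside sum_distrib_left sum_distrib_right mult.assoc sum.swap[of _ "tuples n k"])

lemma par_act_outside: "i \<notin> tuples n k \<Longrightarrow> par_act n k a v i = 0"
  by (simp add: par_act_def diag_act_outside)

lemma par_act_basis_tensor:
  "i \<in> tuples n k \<Longrightarrow> j \<in> tuples n k \<Longrightarrow> par_act n k a (basis_tensor j) i = par_matrix k a i j"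
  by (simp add: par_act_inside basis_tensor_def)

definition bal_representable :: "nat \<Rightarrow> nat \<Rightarrow> ((nat \<Rightarrow> nat) \<Rightarrow> (nat \<Rightarrow> nat) \<Rightarrow> complex) \<Rightarrow> bool" where
  "bal_representable n k M \<longleftrightarrow>
     (\<exists>a. in_Par_bal k a \<and> (\<forall>i\<in>tuples n k. \<forall>j\<in>tuples n k. par_matrix k a i j = M i j))"

lemma bal_representable_cong:
  "bal_representable n k M \<Longrightarrow> (\<And>i j. i \<in> tuples n k \<Longrightarrow> j \<in> tuples n k \<Longrightarrow> M i j = M' i j) \<Longrightarrow>
    bal_representable n k M'"
  unfolding bal_representable_def by metis

lemma bal_representable_diag_entry:
  assumes "p \<in> diagrams k" "balanced p"
  shows "bal_representable n k (diag_entry p)"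
proof -
  have "in_Par_bal k (\<lambda>d. of_bool (d = p))"
    using assms unfolding in_Par_bal_def by auto
  moreover have "par_matrix k (\<lambda>d. of_bool (d = p)) i j = diag_entry p i j" for i j
    using assms(1) by (simp add: par_matrix_def Int_absorb1)
  ultimately show ?thesis
    unfolding bal_representable_def by blast
qed

lemma bal_representable_lincomb:
  assumes "finite S" and rep: "\<And>x. x \<in> S \<Longrightarrow> bal_representable n k (M x)"
  shows "bal_representable n k (\<lambda>i j. \<Sum>x\<in>S. c x * M x i j)"
proof -
  obtain a where a: "\<And>x. x \<in> S \<Longrightarrow>
      in_Par_bal k (a x) \<and> (\<forall>i\<in>tuples n k. \<forall>j\<in>tuples n k. par_matrix k (a x) i j = M x i j)"
    using rep unfolding bal_representable_def by metis
  have "in_Par_bal k (\<lambda>d. \<Sum>x\<in>S. c x * a x d)"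
    using a unfolding in_Par_bal_def by simp
  moreover have "par_matrix k (\<lambda>d. \<Sum>x\<in>S. c x * a x d) i j = (\<Sum>x\<in>S. c x * M x i j)"
    if "i \<in> tuples n k" "j \<in> tuples n k" for i j
  proof -
    have "par_matrix k (\<lambda>d. \<Sum>x\<in>S. c x * a x d) i j = (\<Sum>x\<in>S. c x * par_matrix k (a x) i j)"
      unfolding par_matrix_def sum_distrib_right sum_distrib_left mult.assoc by (rule sum.swap)
    then show ?thesis
      using a that by simp
  qed
  ultimately show ?thesis
    unfolding bal_representable_def by blast
qed

lemma bal_representable_diff:
  assumes "bal_representable n k M" "bal_representable n k M'"
  shows "bal_representable n k (\<lambda>i j. M i j - M' i j)"
proof -
  obtain a a' where "in_Par_bal k a" "in_Par_bal k a'"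
    and "\<forall>i\<in>tuples n k. \<forall>j\<in>tuples n k. par_matrix k a i j = M i j"
    and "\<forall>i\<in>tuples n k. \<forall>j\<in>tuples n k. par_matrix k a' i j = M' i j"
    using assms unfolding bal_representable_def by blast
  then show ?thesis
    unfolding bal_representable_def in_Par_bal_def
    by (intro exI[of _ "\<lambda>d. a d - a' d"]) (simp add: par_matrix_def left_diff_distrib sum_subtractf)
qed

definition kernel_diagram :: "nat \<Rightarrow> (nat \<Rightarrow> nat) \<Rightarrow> (nat \<Rightarrow> nat) \<Rightarrow> diag" where
  "kernel_diagram k i j = verts k // label_kernel k i j"

lemma equiv_label_kernel: "equiv (verts k) (label_kernel k i j)"
  by (rule equivI) (auto simp: label_kernel_def refl_on_def sym_def trans_def)

lemma kernel_diagram_in_diagrams: "kernel_diagram k i j \<in> diagrams k"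
  unfolding kernel_diagram_def diagrams_def by (simp add: partition_on_quotient[OF equiv_label_kernel])

lemma block_rel_quotient:
  assumes "equiv A r"
  shows "block_rel (A // r) = r"
proof
  show "block_rel (A // r) \<subseteq> r"
    unfolding block_rel_def
  proof clarify
    fix x y X assume "X \<in> A // r" "x \<in> X" "y \<in> X"
    then show "(x, y) \<in> r"
      using quotient_eq_iff[OF assms \<open>X \<in> A // r\<close> \<open>X \<in> A // r\<close>] by blast
  qed
  show "r \<subseteq> block_rel (A // r)"
  proof clarify
    fix x y assume "(x, y) \<in> r"
    then have "x \<in> A" "x \<in> r `` {x}" "y \<in> r `` {x}"
      using assms unfolding equiv_def refl_on_def by blast+
    then show "(x, y) \<in> block_rel (A // r)"
      unfolding block_rel_def by (blast intro: quotientI)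
  qed
qed

lemma block_rel_kernel_diagram: "block_rel (kernel_diagram k i j) = label_kernel k i j"
  unfolding kernel_diagram_def by (rule block_rel_quotient[OF equiv_label_kernel])

lemma label_kernel_eq_block_rel_iff:
  "d \<in> diagrams k \<Longrightarrow> label_kernel k i j = block_rel d \<longleftrightarrow> d = kernel_diagram k i j"
  using block_rel_inj[OF _ kernel_diagram_in_diagrams] block_rel_kernel_diagram by metis

lemma balanced_coarsening:
  assumes p: "p \<in> diagrams k" and bal: "balanced p" and d: "d \<in> diagrams k"
    and coarser: "block_rel p \<subseteq> block_rel d"
  shows "balanced d"
  unfolding balanced_def
proof
  fix B' assume B': "B' \<in> d"
  have "B \<subseteq> B' \<or> B \<inter> B' = {}" if B: "B \<in> p" for B
  proof (cases "B \<inter> B' = {}")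
    case False
    then obtain u where u: "u \<in> B" "u \<in> B'"
      by blast
    have "w \<in> B'" if "w \<in> B" for w
    proof -
      have "(u, w) \<in> block_rel d"
        using coarser B u(1) that unfolding block_rel_def by blast
      then obtain B'' where "B'' \<in> d" "u \<in> B''" "w \<in> B''"
        unfolding block_rel_def by blast
      with diagram_block_unique[OF d _ B' _ u(2)] show ?thesis
        by blast
    qed
    then show ?thesis
      by blast
  qed simp
  from balanced_saturated_card[OF p bal this] show "card {r. Inl r \<in> B'} = card {r. Inr r \<in> B'}"
    using diagram_block_subset[OF d B'] by (simp add: Int_absorb2)
qed

definition exact_entry :: "nat \<Rightarrow> diag \<Rightarrow> (nat \<Rightarrow> nat) \<Rightarrow> (nat \<Rightarrow> nat) \<Rightarrow> complex" where
  "exact_entry k p i j = of_bool (label_kernel k i j = block_rel p)"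

lemma diag_entry_eq_sum_exact_entry:
  assumes "p \<in> diagrams k"
  shows "diag_entry p i j = (\<Sum>d\<in>{d \<in> diagrams k. block_rel p \<subseteq> block_rel d}. exact_entry k d i j)"
proof -
  have "(\<Sum>d\<in>{d \<in> diagrams k. block_rel p \<subseteq> block_rel d}. exact_entry k d i j) =
      (\<Sum>d\<in>{d \<in> diagrams k. block_rel p \<subseteq> block_rel d}. of_bool (kernel_diagram k i j = d))"
    unfolding exact_entry_def by (intro sum.cong refl) (auto simp: label_kernel_eq_block_rel_iff)
  also have "\<dots> = of_bool (kernel_diagram k i j \<in> {d \<in> diagrams k. block_rel p \<subseteq> block_rel d})"
    unfolding of_bool_def by (rule sum.delta') simp
  also have "\<dots> = of_bool (block_rel p \<subseteq> label_kernel k i j)"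
    using kernel_diagram_in_diagrams[of k i j] by (simp add: block_rel_kernel_diagram)
  finally show ?thesis
    using diag_entry_block_rel[OF assms] by simp
qed

lemma bal_representable_exact_entry:
  assumes "p \<in> diagrams k" "balanced p"
  shows "bal_representable n k (exact_entry k p)"
  using assms
proof (induction "card (verts k \<times> verts k) - card (block_rel p)" arbitrary: p rule: less_induct)
  case less
  define S where "S = {d \<in> diagrams k. block_rel p \<subset> block_rel d}"
  have "finite S"
    unfolding S_def by simp
  have "bal_representable n k (exact_entry k d)" if "d \<in> S" for d
  proof -
    have d: "d \<in> diagrams k" and coarser: "block_rel p \<subset> block_rel d"
      using that unfolding S_def by auto
    have "card (block_rel p) < card (block_rel d)"
      using psubset_card_mono[OF finite_subset[OF block_rel_subset[OF d]] coarser] by simp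
    moreover have "card (block_rel d) \<le> card (verts k \<times> verts k)"
      using card_mono[OF _ block_rel_subset[OF d]] by simp
    ultimately show ?thesis
      using less.hyps[OF _ d] balanced_coarsening[OF less.prems d] coarser by fastforce
  qed
  then have "bal_representable n k (\<lambda>i j. \<Sum>d\<in>S. exact_entry k d i j)"
    using bal_representable_lincomb[OF \<open>finite S\<close>, where c = "\<lambda>_. 1" and M = "exact_entry k"] by simp
  then have "bal_representable n k (\<lambda>i j. diag_entry p i j - (\<Sum>d\<in>S. exact_entry k d i j))"
    using bal_representable_diff[OF bal_representable_diag_entry[OF less.prems]] by simp
  moreover have "{d \<in> diagrams k. block_rel p \<subseteq> block_rel d} = insert p S" "p \<notin> S"
    using less.prems(1) block_rel_inj[OF less.prems(1)] unfolding S_def by auto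
  ultimately show ?case
    using diag_entry_eq_sum_exact_entry[OF less.prems(1)] \<open>finite S\<close>
    by (elim bal_representable_cong) simp
qed

lemma inj_on_extends_to_permutes:
  assumes S: "finite S" and A: "A \<subseteq> S" and inj: "inj_on \<phi> A" and image: "\<phi> ` A \<subseteq> S"
  obtains \<sigma> where "\<sigma> permutes S" "\<And>x. x \<in> A \<Longrightarrow> \<sigma> x = \<phi> x"
proof -
  have "finite A"
    using finite_subset[OF A S] .
  then have "card (S - A) = card (S - \<phi> ` A)"
    using card_Diff_subset[OF _ A] card_Diff_subset[OF _ image] card_image[OF inj] by simp
  then obtain \<psi> where \<psi>: "bij_betw \<psi> (S - A) (S - \<phi> ` A)"
    using finite_same_card_bij S by blast
  define \<sigma> where "\<sigma> x = (if x \<in> A then \<phi> x else if x \<in> S then \<psi> x else x)" for x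
  have "bij_betw \<sigma> A (\<phi> ` A)"
    using inj_on_imp_bij_betw[OF inj] by (rule bij_betw_cong[THEN iffD1, rotated]) (simp add: \<sigma>_def)
  moreover have "bij_betw \<sigma> (S - A) (S - \<phi> ` A)"
    using \<psi> by (rule bij_betw_cong[THEN iffD1, rotated]) (simp add: \<sigma>_def)
  ultimately have "bij_betw \<sigma> (A \<union> (S - A)) (\<phi> ` A \<union> (S - \<phi> ` A))"
    by (rule bij_betw_combine) blast
  moreover have "A \<union> (S - A) = S" "\<phi> ` A \<union> (S - \<phi> ` A) = S"
    using A image by blast+
  ultimately have "\<sigma> permutes S"
    by (intro bij_imp_permutes) (auto simp: \<sigma>_def)
  then show ?thesis
    using that by (simp add: \<sigma>_def)
qed

lemma label_kernel_eq_imp_relabel: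
  assumes i: "i \<in> tuples n k" and j: "j \<in> tuples n k" and i': "i' \<in> tuples n k" and j': "j' \<in> tuples n k"
    and kernel: "label_kernel k i j = label_kernel k i' j'"
  obtains \<sigma> where "\<sigma> permutes {..<n}" "relabel k \<sigma> i = i'" "relabel k \<sigma> j = j'"
proof -
  have same: "idx i j u = idx i j w \<longleftrightarrow> idx i' j' u = idx i' j' w" if "u \<in> verts k" "w \<in> verts k" for u w
    using kernel that unfolding label_kernel_def by blast
  define A where "A = idx i j ` verts k"
  define \<phi> where "\<phi> x = idx i' j' (SOME u. u \<in> verts k \<and> idx i j u = x)" for x
  have \<phi>: "\<phi> (idx i j u) = idx i' j' u" if u: "u \<in> verts k" for u
  proof -
    have "\<exists>w. w \<in> verts k \<and> idx i j w = idx i j u"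
      using u by blast
    from someI_ex[OF this] show ?thesis
      unfolding \<phi>_def using same[OF _ u] by blast
  qed
  have "inj_on \<phi> A"
    unfolding A_def by (rule inj_onI) (auto simp: \<phi> same)
  moreover have "A \<subseteq> {..<n}" "\<phi> ` A \<subseteq> {..<n}"
    unfolding A_def using idx_less[OF i j] idx_less[OF i' j'] by (auto simp: \<phi>)
  ultimately obtain \<sigma> where \<sigma>: "\<sigma> permutes {..<n}" and on_A: "\<And>x. x \<in> A \<Longrightarrow> \<sigma> x = \<phi> x"
    using inj_on_extends_to_permutes[of "{..<n}" A \<phi>] by blast
  have \<sigma>_idx: "\<sigma> (idx i j u) = idx i' j' u" if "u \<in> verts k" for u
    using on_A \<phi> that unfolding A_def by auto
  have "relabel k \<sigma> i = i'"
  proof (rule tuples_eqI[OF relabel_in_tuples[OF permutes_less[OF \<sigma>] i] i'])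
    fix r assume "r < k"
    then show "relabel k \<sigma> i r = i' r"
      using \<sigma>_idx[of "Inl r"] by (simp add: relabel_def idx_def)
  qed
  moreover have "relabel k \<sigma> j = j'"
  proof (rule tuples_eqI[OF relabel_in_tuples[OF permutes_less[OF \<sigma>] j] j'])
    fix r assume "r < k"
    then show "relabel k \<sigma> j r = j' r"
      using \<sigma>_idx[of "Inr r"] by (simp add: relabel_def idx_def)
  qed
  ultimately show ?thesis
    using that \<sigma> by blast
qed

lemma balanced_kernel_diagramI:
  assumes "\<And>x. card {r. r < k \<and> i r = x} = card {r. r < k \<and> j r = x}"
  shows "balanced (kernel_diagram k i j)"
  unfolding balanced_def
proof
  fix B assume "B \<in> kernel_diagram k i j"
  then obtain u where "u \<in> verts k" "B = label_kernel k i j `` {u}"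
    unfolding kernel_diagram_def by (auto elim: quotientE)
  then have "{r. Inl r \<in> B} = {r. r < k \<and> i r = idx i j u}" "{r. Inr r \<in> B} = {r. r < k \<and> j r = idx i j u}"
    unfolding label_kernel_def by (auto simp: idx_def)
  then show "card {r. Inl r \<in> B} = card {r. Inr r \<in> B}"
    using assms by simp
qed

locale equivariant_endo =
  fixes n k :: nat and f :: "((nat \<Rightarrow> nat) \<Rightarrow> complex) \<Rightarrow> ((nat \<Rightarrow> nat) \<Rightarrow> complex)"
  assumes equiv_endo: "equiv_endo n k f"
begin

definition matrix :: "(nat \<Rightarrow> nat) \<Rightarrow> (nat \<Rightarrow> nat) \<Rightarrow> complex" where
  "matrix i j = f (basis_tensor j) i"

lemma maps_Tens: "v \<in> Tens n k \<Longrightarrow> f v \<in> Tens n k"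
  and additive: "v \<in> Tens n k \<Longrightarrow> w \<in> Tens n k \<Longrightarrow> f (tadd v w) = tadd (f v) (f w)"
  and homogeneous: "v \<in> Tens n k \<Longrightarrow> f (tscale c v) = tscale c (f v)"
  and commutes: "t \<in> torus n \<Longrightarrow> \<sigma> permutes {..<n} \<Longrightarrow> v \<in> Tens n k \<Longrightarrow>
      f (grp_act n k t \<sigma> v) = grp_act n k t \<sigma> (f v)"
  using equiv_endo unfolding equiv_endo_def by blast+

lemma lincomb:
  assumes "finite S" "\<And>x. x \<in> S \<Longrightarrow> w x \<in> Tens n k"
  shows "f (\<lambda>i. \<Sum>x\<in>S. c x * w x i) = (\<lambda>i. \<Sum>x\<in>S. c x * f (w x) i)"
  using assms
proof (induction S rule: finite_induct)
  case empty
  have "f (tscale 0 (\<lambda>_. 0)) = tscale 0 (f (\<lambda>_. 0))"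
    by (rule homogeneous) (simp add: Tens_def)
  then show ?case
    by (simp add: tscale_def)
next
  case (insert x S)
  have wx: "w x \<in> Tens n k"
    using insert.prems by simp
  have Tens: "tscale (c x) (w x) \<in> Tens n k" "(\<lambda>i. \<Sum>y\<in>S. c y * w y i) \<in> Tens n k"
    using wx insert.prems unfolding Tens_def tscale_def by simp_all
  have "(\<lambda>i. \<Sum>y\<in>insert x S. c y * w y i) = tadd (tscale (c x) (w x)) (\<lambda>i. \<Sum>y\<in>S. c y * w y i)"
    using insert.hyps by (simp add: tadd_def tscale_def)
  then have "f (\<lambda>i. \<Sum>y\<in>insert x S. c y * w y i) =
      tadd (tscale (c x) (f (w x))) (\<lambda>i. \<Sum>y\<in>S. c y * f (w y) i)"
    using additive[OF Tens] homogeneous[OF wx] insert.IH insert.prems by simp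
  then show ?case
    using insert.hyps by (simp add: tadd_def tscale_def)
qed

lemma apply_matrix:
  assumes v: "v \<in> Tens n k"
  shows "f v i = (\<Sum>j\<in>tuples n k. matrix i j * v j)"
proof -
  have decompose: "(\<lambda>i. \<Sum>j\<in>tuples n k. v j * basis_tensor j i) = v"
  proof
    fix i
    show "(\<Sum>j\<in>tuples n k. v j * basis_tensor j i) = v i"
      using v by (cases "i \<in> tuples n k") (auto simp: basis_tensor_def Tens_def Int_insert_right)
  qed
  have "f v = (\<lambda>i. \<Sum>j\<in>tuples n k. v j * f (basis_tensor j) i)"
    using lincomb[of "tuples n k" basis_tensor v, OF finite_tuples basis_tensor_in_Tens] unfolding decompose .
  then show ?thesis
    by (simp add: matrix_def mult.commute)
qed

lemma matrix_relabel:
  assumes \<sigma>: "\<sigma> permutes {..<n}" and i: "i \<in> tuples n k" and j: "j \<in> tuples n k"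
  shows "matrix (relabel k \<sigma> i) (relabel k \<sigma> j) = matrix i j"
proof -
  have inv_relabel: "relabel k (inv \<sigma>) (relabel k \<sigma> x) = x" if "x \<in> tuples n k" for x
    using relabel_relabel[OF that] permutes_inverses(2)[OF \<sigma>] by blast
  have "grp_act n k (\<lambda>_. 1) \<sigma> (basis_tensor j) = basis_tensor (relabel k \<sigma> j)"
  proof
    fix x
    show "grp_act n k (\<lambda>_. 1) \<sigma> (basis_tensor j) x = basis_tensor (relabel k \<sigma> j) x"
    proof (cases "x \<in> tuples n k")
      case True
      have "relabel k (inv \<sigma>) x = j \<longleftrightarrow> x = relabel k \<sigma> j"
        using inv_relabel[OF j] relabel_relabel[OF True] permutes_inverses(1)[OF \<sigma>] by metis
      then show ?thesis
        using True by (simp add: grp_act_inside basis_tensor_def)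
    next
      case False
      then show ?thesis
        using relabel_in_tuples[OF permutes_less[OF \<sigma>] j]
        by (auto simp: grp_act_outside basis_tensor_def)
    qed
  qed
  moreover have "(\<lambda>_. 1) \<in> torus n"
    unfolding torus_def by simp
  ultimately have "matrix (relabel k \<sigma> i) (relabel k \<sigma> j) =
      grp_act n k (\<lambda>_. 1) \<sigma> (f (basis_tensor j)) (relabel k \<sigma> i)"
    unfolding matrix_def using commutes[OF _ \<sigma> basis_tensor_in_Tens[OF j]] by metis
  also have "\<dots> = matrix i j"
    using relabel_in_tuples[OF permutes_less[OF \<sigma>] i] inv_relabel[OF i]
    by (simp add: grp_act_inside matrix_def)
  finally show ?thesis .
qed

lemma matrix_torus:
  assumes t: "t \<in> torus n" and i: "i \<in> tuples n k" and j: "j \<in> tuples n k"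
  shows "(\<Prod>r<k. t (i r)) * matrix i j = (\<Prod>r<k. t (j r)) * matrix i j"
proof -
  have relabel_id: "relabel k id x = x" if "x \<in> tuples n k" for x
  proof -
    have "relabel k id x \<in> tuples n k"
      using relabel_in_tuples[of n id x k] that by simp
    then show ?thesis
      by (rule tuples_eqI[OF _ that]) (simp add: relabel_def)
  qed
  have "grp_act n k t id (basis_tensor j) = tscale (\<Prod>r<k. t (j r)) (basis_tensor j)"
  proof
    fix x
    show "grp_act n k t id (basis_tensor j) x = tscale (\<Prod>r<k. t (j r)) (basis_tensor j) x"
      using j relabel_id
      by (cases "x \<in> tuples n k") (auto simp: grp_act_inside grp_act_outside tscale_def basis_tensor_def inv_id)
  qed
  then have "(\<Prod>r<k. t (j r)) * matrix i j = f (grp_act n k t id (basis_tensor j)) i"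
    using homogeneous[OF basis_tensor_in_Tens[OF j]] by (simp add: tscale_def matrix_def)
  also have "\<dots> = (\<Prod>r<k. t (i r)) * matrix i j"
    using commutes[OF t permutes_id basis_tensor_in_Tens[OF j]] i relabel_id[OF i]
    by (simp add: grp_act_inside matrix_def inv_id)
  finally show ?thesis ..
qed

lemma balanced_if_matrix_nonzero:
  assumes i: "i \<in> tuples n k" and j: "j \<in> tuples n k" and nonzero: "matrix i j \<noteq> 0"
  shows "balanced (kernel_diagram k i j)"
proof (rule balanced_kernel_diagramI)
  fix x
  \<comment> \<open>the torus element doubling the coordinate \<open>x\<close> weighs each tuple by 2 to the number of its entries equal to \<open>x\<close>\<close>
  define t where "t y = (if y = x then 2 else 1 :: complex)" for y :: nat
  have weight: "(\<Prod>r<k. t (l r)) = 2 ^ card {r. r < k \<and> l r = x}" for l :: "nat \<Rightarrow> nat"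
    unfolding t_def using prod.inter_filter[of "{..<k}" "\<lambda>_. 2 :: complex" "\<lambda>r. l r = x"] by simp
  have "t \<in> torus n"
    unfolding torus_def t_def by simp
  from matrix_torus[OF this i j] nonzero
  have "(2::complex) ^ card {r. r < k \<and> i r = x} = 2 ^ card {r. r < k \<and> j r = x}"
    by (simp add: weight)
  then have "of_nat (2 ^ card {r. r < k \<and> i r = x}) = (of_nat (2 ^ card {r. r < k \<and> j r = x}) :: complex)"
    by simp
  then have "(2::nat) ^ card {r. r < k \<and> i r = x} = 2 ^ card {r. r < k \<and> j r = x}"
    by (simp only: of_nat_eq_iff)
  then show "card {r. r < k \<and> i r = x} = card {r. r < k \<and> j r = x}"
    by simp
qed

lemma matrix_label_kernel:
  assumes "i \<in> tuples n k" "j \<in> tuples n k" "i' \<in> tuples n k" "j' \<in> tuples n k"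
    and "label_kernel k i j = label_kernel k i' j'"
  shows "matrix i j = matrix i' j'"
  using label_kernel_eq_imp_relabel[OF assms] matrix_relabel[OF _ assms(1,2)] by metis

lemma bal_representable_matrix: "bal_representable n k matrix"
proof -
  define P where "P = {p \<in> diagrams k. balanced p}"
  define witness where
    "witness p = (SOME q. q \<in> tuples n k \<times> tuples n k \<and> label_kernel k (fst q) (snd q) = block_rel p)" for p
  define coeff where "coeff p = matrix (fst (witness p)) (snd (witness p))" for p
  have "finite P"
    unfolding P_def by simp
  have "bal_representable n k (\<lambda>i j. \<Sum>p\<in>P. coeff p * exact_entry k p i j)"
    using \<open>finite P\<close> by (rule bal_representable_lincomb) (simp add: P_def bal_representable_exact_entry)
  then show ?thesis
  proof (rule bal_representable_cong)
    fix i j assume i: "i \<in> tuples n k" and j: "j \<in> tuples n k"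
    have "(\<Sum>p\<in>P. coeff p * exact_entry k p i j) = (\<Sum>p\<in>P. if kernel_diagram k i j = p then coeff p else 0)"
      by (intro sum.cong refl) (auto simp: exact_entry_def P_def label_kernel_eq_block_rel_iff)
    also have "\<dots> = (if kernel_diagram k i j \<in> P then coeff (kernel_diagram k i j) else 0)"
      by (rule sum.delta'[OF \<open>finite P\<close>])
    also have "\<dots> = matrix i j"
    proof (cases "kernel_diagram k i j \<in> P")
      case True
      have "\<exists>q. q \<in> tuples n k \<times> tuples n k \<and> label_kernel k (fst q) (snd q) = block_rel (kernel_diagram k i j)"
        using i j by (auto simp: block_rel_kernel_diagram)
      from someI_ex[OF this] have "coeff (kernel_diagram k i j) = matrix i j"
        unfolding coeff_def witness_def using matrix_label_kernel[OF _ _ i j]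
        by (simp add: block_rel_kernel_diagram mem_Times_iff)
      with True show ?thesis
        by simp
    next
      case False
      then have "matrix i j = 0"
        using balanced_if_matrix_nonzero[OF i j] kernel_diagram_in_diagrams unfolding P_def by blast
      with False show ?thesis
        by simp
    qed
    finally show "(\<Sum>p\<in>P. coeff p * exact_entry k p i j) = matrix i j" .
  qed
qed

lemma represented_by_bal: "\<exists>a. in_Par_bal k a \<and> (\<forall>v\<in>Tens n k. par_act n k a v = f v)"
proof -
  obtain a where a: "in_Par_bal k a"
    and matrix: "\<And>i j. i \<in> tuples n k \<Longrightarrow> j \<in> tuples n k \<Longrightarrow> par_matrix k a i j = matrix i j"
    using bal_representable_matrix unfolding bal_representable_def by blast
  have "par_act n k a v i = f v i" if v: "v \<in> Tens n k" for v i
  proof (cases "i \<in> tuples n k")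
    case True
    then show ?thesis
      by (simp add: par_act_inside apply_matrix[OF v] matrix cong: sum.cong)
  next
    case False
    then show ?thesis
      using maps_Tens[OF v] by (simp add: par_act_outside Tens_def)
  qed
  with a show ?thesis
    by blast
qed

end

section \<open>Injectivity for $n \<ge> k$\<close>

lemma balanced_diagram_is_kernel:
  assumes p: "p \<in> diagrams k" and bal: "balanced p" and "k \<le> n"
  obtains i j where "i \<in> tuples n k" "j \<in> tuples n k" "label_kernel k i j = block_rel p"
proof -
  let ?cls = "\<lambda>u. block_rel p `` {u}"
  have equiv: "equiv (verts k) (block_rel p)"
    unfolding block_rel_def by (rule equiv_partition_on[OF diagrams_partition_on[OF p]])
  define lab where "lab u = (LEAST r. Inl r \<in> ?cls u)" for u
  have lab: "lab u < k \<and> Inl (lab u) \<in> ?cls u" if "u \<in> verts k" for u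
  proof -
    have "?cls u \<in> p"
      using quotientI[OF that] quotient_block_rel[OF p] by metis
    then obtain r where "r < k" "Inl r \<in> ?cls u"
      using balanced_block_meets_top[OF p bal] by blast
    then show ?thesis
      unfolding lab_def using LeastI[of "\<lambda>r. Inl r \<in> ?cls u" r] Least_le[of "\<lambda>r. Inl r \<in> ?cls u" r]
      by auto
  qed
  have same_lab: "lab u = lab w \<longleftrightarrow> (u, w) \<in> block_rel p" if "u \<in> verts k" "w \<in> verts k" for u w
  proof
    assume "lab u = lab w"
    then have "(u, Inl (lab u)) \<in> block_rel p" "(w, Inl (lab u)) \<in> block_rel p"
      using lab[OF that(1)] lab[OF that(2)] by auto
    then show "(u, w) \<in> block_rel p"
      using equiv unfolding equiv_def sym_def trans_def by blast
  next
    assume "(u, w) \<in> block_rel p"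
    then have "?cls u = ?cls w"
      using equiv_class_eq[OF equiv] by blast
    then show "lab u = lab w"
      unfolding lab_def by simp
  qed
  define i where "i = restrict (\<lambda>r. lab (Inl r)) {..<k}"
  define j where "j = restrict (\<lambda>r. lab (Inr r)) {..<k}"
  have "lab u < n" if "u \<in> verts k" for u
    using lab[OF that] \<open>k \<le> n\<close> by linarith
  then have "i \<in> tuples n k" "j \<in> tuples n k"
    unfolding i_def j_def by (auto intro!: restrict_in_tuples)
  moreover have "idx i j u = lab u" if "u \<in> verts k" for u
    using that by (cases u) (auto simp: idx_def i_def j_def)
  then have "label_kernel k i j = block_rel p"
    using same_lab block_rel_subset[OF p] unfolding label_kernel_def by auto
  ultimately show ?thesis
    using that by blast
qed

lemma par_matrix_eq_sum_finer:
  "par_matrix k a i j = (\<Sum>d\<in>{d \<in> diagrams k. block_rel d \<subseteq> label_kernel k i j}. a d)"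
  unfolding par_matrix_def
  by (simp add: diag_entry_block_rel of_bool_def[symmetric] Int_def cong: sum.cong)

lemma in_Par_bal_eq_zero_if_par_matrix_zero:
  assumes "k \<le> n" and a: "in_Par_bal k a"
    and zero: "\<And>i j. i \<in> tuples n k \<Longrightarrow> j \<in> tuples n k \<Longrightarrow> par_matrix k a i j = 0"
  shows "a p = 0"
proof (induction "card (block_rel p)" arbitrary: p rule: less_induct)
  case less
  show ?case
  proof (cases "p \<in> diagrams k \<and> balanced p")
    case True
    then obtain i j where "i \<in> tuples n k" "j \<in> tuples n k" and kernel: "label_kernel k i j = block_rel p"
      using balanced_diagram_is_kernel \<open>k \<le> n\<close> by blast
    define S where "S = {d \<in> diagrams k. block_rel d \<subset> block_rel p}"
    have "a d = 0" if "d \<in> S" for d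
    proof -
      have "card (block_rel d) < card (block_rel p)"
        using that True finite_subset[OF block_rel_subset] unfolding S_def by (auto intro: psubset_card_mono)
      then show ?thesis
        by (rule less.hyps)
    qed
    moreover have "{d \<in> diagrams k. block_rel d \<subseteq> block_rel p} = insert p S" "p \<notin> S" "finite S"
      using True block_rel_inj[OF _ conjunct1[OF True]] unfolding S_def by auto
    ultimately have "par_matrix k a i j = a p"
      unfolding par_matrix_eq_sum_finer kernel by simp
    with zero[OF \<open>i \<in> tuples n k\<close> \<open>j \<in> tuples n k\<close>] show ?thesis
      by simp
  qed (use a in \<open>simp add: in_Par_bal_def\<close>)
qed

lemma par_act_injective:
  assumes "k \<le> n" "in_Par_bal k a" "\<forall>v\<in>Tens n k. par_act n k a v = (\<lambda>_. 0)"
  shows "a = (\<lambda>_. 0)"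
proof
  fix p
  have "par_matrix k a i j = 0" if "i \<in> tuples n k" "j \<in> tuples n k" for i j
    using assms(3) basis_tensor_in_Tens[OF that(2)] par_act_basis_tensor[OF that, symmetric] by simp
  then show "a p = 0"
    by (rule in_Par_bal_eq_zero_if_par_matrix_zero[OF assms(1,2)])
qed

theorem proposition4p1:
  fixes n m k :: nat
  shows
    \<comment> \<open>(1) Par^bal(k) is a subalgebra of Par(n,k)\<close>
    "(\<forall>a b. in_Par_bal k a \<and> in_Par_bal k b \<longrightarrow> in_Par_bal k (par_mult n k a b))
     \<and> in_Par_bal k (par_one k)
    \<comment> \<open>(2) the identification Par^bal(k) in Par(n,k) with Par^bal(k) in Par(m,k) is an algebra isomorphism\<close>
     \<and> (\<forall>a b. in_Par_bal k a \<and> in_Par_bal k b \<longrightarrow> par_mult n k a b = par_mult m k a b)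
    \<comment> \<open>(3a) the restricted action is T \<rtimes> S_n-equivariant and an algebra homomorphism\<close>
     \<and> (\<forall>a. in_Par_bal k a \<longrightarrow> equiv_endo n k (par_act n k a))
     \<and> (\<forall>a b. \<forall>v\<in>Tens n k. in_Par_bal k a \<and> in_Par_bal k b \<longrightarrow>
           par_act n k (par_mult n k a b) v = par_act n k a (par_act n k b v))
     \<and> (\<forall>v\<in>Tens n k. par_act n k (par_one k) v = v)
    \<comment> \<open>(3b) surjectivity onto End_{T \<rtimes> S_n}(V^{\<otimes>k})\<close>
     \<and> (\<forall>f. equiv_endo n k f \<longrightarrow> (\<exists>a. in_Par_bal k a \<and> (\<forall>v\<in>Tens n k. par_act n k a v = f v)))
    \<comment> \<open>(3c) injectivity when n \<ge> k\<close>
     \<and> (k \<le> n \<longrightarrow> (\<forall>a. in_Par_bal k a \<and> (\<forall>v\<in>Tens n k. par_act n k a v = (\<lambda>_. 0)) \<longrightarrow> a = (\<lambda>_. 0)))"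
proof (intro conjI allI impI ballI)
  fix a b v f
  assume "in_Par_bal k a \<and> in_Par_bal k b"
  then show "in_Par_bal k (par_mult n k a b)" "par_mult n k a b = par_mult m k a b"
    "par_act n k (par_mult n k a b) v = par_act n k a (par_act n k b v)"
    by (simp_all add: in_Par_bal_par_mult par_mult_indep_of_n par_act_par_mult)
next
  show "in_Par_bal k (par_one k)"
    by (rule in_Par_bal_par_one)
next
  fix a
  assume "in_Par_bal k a"
  then show "equiv_endo n k (par_act n k a)"
    by (rule equiv_endo_par_act)
next
  fix v
  assume "v \<in> Tens n k"
  then show "par_act n k (par_one k) v = v"
    by (rule par_act_par_one)
next
  fix f
  assume "equiv_endo n k f"
  then show "\<exists>a. in_Par_bal k a \<and> (\<forall>v\<in>Tens n k. par_act n k a v = f v)"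
    by (rule equivariant_endo.represented_by_bal[OF equivariant_endo.intro])
next
  fix a
  assume "k \<le> n" "in_Par_bal k a \<and> (\<forall>v\<in>Tens n k. par_act n k a v = (\<lambda>_. 0))"
  then show "a = (\<lambda>_. 0)"
    using par_act_injective by blast
qed

end
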